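(* Let $y_0\in\mathbb{R}$, $b>0$, $\epsilon>0$, and let $f:[y_0,\infty)\to\mathbb{R}$ be such that $p:=1/f$ is well defined and twice differentiable on $[y_0,\infty)$, with $f(y_0)>0$, $f'(y)>0$ and $p''(y)>0$ for all $y\ge y_0$. Assume $b<\int_{y_0}^{\infty}p(y)\,dy$ (possibly $+\infty$). For $h>0$ and integers $N\ge0$ define $$\Sigma_{l,h,N}=\sum_{i=1}^{N}h\,p(y_0+hi),\qquad \Sigma_{t,h,N}=\sum_{i=1}^{N}\frac h2\big(p(y_0+hi)+p(y_0+h(i-1))\big).$$ For each positive integer $j$ let $h^{(j)}=\epsilon/j$, let $n_2^{(j)}$ be the smallest positive integer $N$ with $\Sigma_{l,h^{(j)},N}\ge b$ (assume $n_2^{(1)}$ exists), and let $n_3^{(j)}$ be the largest integer $N\ge0$ with $\Sigma_{t,h^{(j)},N}\le b$. Then for every positive integer $j$, $$n_2^{(j)}>n_3^{(j)}\qquad\text{and}\qquad h^{(j)}\,n_3^{(j)}\ge h^{(1)}\,n_3^{(1)}.$$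
   Context: $\Sigma_{l,h,N}$ and $\Sigma_{t,h,N}$ are the lower rectangular and trapezoidal sums with step $h$ for $\int_{y_0}^{y_0+hN}p(y)\,dy$; empty sums are $0$. *)

theory Defs
  imports "HOL-Analysis.Analysis"
begin

definition sigma_l :: "(real \<Rightarrow> real) \<Rightarrow> real \<Rightarrow> real \<Rightarrow> nat \<Rightarrow> real" where
  "sigma_l p y0 h N = (\<Sum>i=1..N. h * p (y0 + h * real i))"

definition sigma_t :: "(real \<Rightarrow> real) \<Rightarrow> real \<Rightarrow> real \<Rightarrow> nat \<Rightarrow> real" where
  "sigma_t p y0 h N =
     (\<Sum>i=1..N. h / 2 * (p (y0 + h * real i) + p (y0 + h * (real i - 1))))"

definition n2 :: "(real \<Rightarrow> real) \<Rightarrow> real \<Rightarrow> real \<Rightarrow> real \<Rightarrow> nat" where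
  "n2 p y0 b h = (LEAST N. 0 < N \<and> b \<le> sigma_l p y0 h N)"

definition n3 :: "(real \<Rightarrow> real) \<Rightarrow> real \<Rightarrow> real \<Rightarrow> real \<Rightarrow> nat" where
  "n3 p y0 b h = (GREATEST N. sigma_t p y0 h N \<le> b)"

end

theory Submission
  imports Defs
begin

text \<open>Since f increases, p = 1/f is positive and strictly decreasing, and p'' > 0 makes it
convex. Decrease gives that the lower sum lies strictly below the trapezoidal sum, so a trapezoidal
sum that is at most b has fewer terms than n2. Refining the step from h to h/j splits every
interval into j pieces; the lower sum can only grow (p decreases) while the trapezoidal sum can
only shrink (on each interval a convex function lies below its chord, for which the trapezoidal
rule is exact). Hence j*n3 at step h is admissible at step h/j, which gives the monotonicity of
h*n3, and the lower sum at step h/j reaches b, so n2 exists at every step size.\<close>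

lemma mvt_within_atLeast:
  fixes g g' :: "real \<Rightarrow> real"
  assumes deriv: "\<And>x. a \<le> x \<Longrightarrow> (g has_real_derivative g' x) (at x within {a..})"
    and "a \<le> x" "x < y"
  shows "\<exists>\<xi>\<in>{x<..<y}. g y - g x = g' \<xi> * (y - x)"
proof -
  have "(g has_derivative (*) (g' \<xi>)) (at \<xi> within {x..y})" if "x \<le> \<xi>" "\<xi> \<le> y" for \<xi>
    using has_field_derivative_subset[OF deriv[of \<xi>], of "{x..y}"] that assms(2)
    by (auto simp: has_field_derivative_def)
  from mvt_simple[OF \<open>x < y\<close> this] show ?thesis .
qed

lemma strict_mono_on_atLeast_if_deriv_pos:
  fixes g g' :: "real \<Rightarrow> real"
  assumes deriv: "\<And>x. a \<le> x \<Longrightarrow> (g has_real_derivative g' x) (at x within {a..})"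
    and pos: "\<And>x. a \<le> x \<Longrightarrow> 0 < g' x"
  shows "strict_mono_on {a..} g"
proof (rule strict_mono_onI)
  fix x y assume "x \<in> {a..}" "y \<in> {a..}" "x < y"
  then obtain \<xi> where "\<xi> \<in> {x<..<y}" "g y - g x = g' \<xi> * (y - x)"
    using mvt_within_atLeast[OF deriv] by force
  moreover have "0 < g' \<xi> * (y - x)"
    using \<open>x \<in> {a..}\<close> \<open>x < y\<close> \<open>\<xi> \<in> {x<..<y}\<close> pos[of \<xi>] by simp
  ultimately show "g x < g y" by simp
qed

lemma convex_on_atLeast_if_deriv_mono:
  fixes g g' :: "real \<Rightarrow> real"
  assumes deriv: "\<And>x. a \<le> x \<Longrightarrow> (g has_real_derivative g' x) (at x within {a..})"
    and mono: "mono_on {a..} g'"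
  shows "convex_on {a..} g"
proof (rule pos_convex_function[where f' = g'])
  fix x y assume x: "x \<in> {a..}" and y: "y \<in> {a..}"
  consider "x < y" | "x = y" | "y < x" by linarith
  then show "g' x * (y - x) \<le> g y - g x"
  proof cases
    case 1
    then obtain \<xi> where "\<xi> \<in> {x<..<y}" "g y - g x = g' \<xi> * (y - x)"
      using mvt_within_atLeast[OF deriv] x by force
    moreover have "g' x \<le> g' \<xi>" using mono_onD[OF mono] x \<open>\<xi> \<in> {x<..<y}\<close> by auto
    ultimately show ?thesis using 1 by (simp add: mult_right_mono)
  next
    case 3
    then obtain \<xi> where "\<xi> \<in> {y<..<x}" "g x - g y = g' \<xi> * (x - y)"
      using mvt_within_atLeast[OF deriv] y by force
    moreover have "g' \<xi> \<le> g' x" using mono_onD[OF mono] y \<open>\<xi> \<in> {y<..<x}\<close> by auto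
    moreover have "g' \<xi> * (x - y) \<le> g' x * (x - y)"
      using \<open>g' \<xi> \<le> g' x\<close> 3 by (simp add: mult_right_mono)
    ultimately show ?thesis by (simp add: algebra_simps)
  qed simp
qed simp

lemma sum_lessThan_mult_group:
  "(\<Sum>i<N * j. g i) = (\<Sum>m<N. \<Sum>k<j. g (m * j + k))" for g :: "nat \<Rightarrow> 'a::comm_monoid_add"
  by (simp add: sum.nat_group[symmetric] atLeast0LessThan add.commute
      sum.shift_bounds_nat_ivl[of _ 0 "m * j" j for m, simplified])

lemma trapezoid_sum_affine:
  "(\<Sum>k<j. (A + c * real (Suc k)) + (A + c * real k)) = real j * (2 * A + c * real j)"
  by (induction j) (simp_all add: algebra_simps)

lemma sigma_l_lessThan: "sigma_l p y0 h N = (\<Sum>i<N. h * p (y0 + h * real (Suc i)))"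
  unfolding sigma_l_def by (induction N) auto

lemma sigma_t_lessThan:
  "sigma_t p y0 h N = (\<Sum>i<N. h / 2 * (p (y0 + h * real (Suc i)) + p (y0 + h * real i)))"
  unfolding sigma_t_def by (induction N) auto

lemma antimono_on_right_riemann_sum_refine:
  assumes dec: "antimono_on {a..a + h} g" and "0 \<le> h" "0 < j"
  shows "h * g (a + h) \<le> (\<Sum>k<j. h / j * g (a + h / j * real (Suc k)))"
proof -
  have "g (a + h) \<le> g (a + h / j * real (Suc k))" if "k < j" for k
  proof -
    have "h / j * real (Suc k) \<le> h / j * real j"
      using that \<open>0 \<le> h\<close> by (intro mult_left_mono) auto
    then have "a + h / j * real (Suc k) \<in> {a..a + h}" using \<open>0 \<le> h\<close> \<open>0 < j\<close> by auto
    then show ?thesis using monotone_onD[OF dec] \<open>0 \<le> h\<close> by auto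
  qed
  then have "(\<Sum>k<j. h / j * g (a + h)) \<le> (\<Sum>k<j. h / j * g (a + h / j * real (Suc k)))"
    using \<open>0 \<le> h\<close> by (intro sum_mono mult_left_mono) auto
  then show ?thesis using \<open>0 < j\<close> by simp
qed

lemma convex_on_trapezoid_sum_refine:
  assumes conv: "convex_on {a..a + h} g" and "0 \<le> h" "0 < j"
  shows "(\<Sum>k<j. h / j / 2 * (g (a + h / j * real (Suc k)) + g (a + h / j * real k)))
    \<le> h / 2 * (g a + g (a + h))"
proof -
  define c where "c = (g (a + h) - g a) / j"
  have chord: "g (a + h / j * real k) \<le> g a + c * real k" if "k \<le> j" for k
  proof -
    define t where "t = real k / j"
    have t: "0 \<le> t" "t \<le> 1" using that \<open>0 < j\<close> by (auto simp: t_def)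
    have "g ((1 - t) *\<^sub>R a + t *\<^sub>R (a + h)) \<le> (1 - t) * g a + t * g (a + h)"
      using convex_onD[OF conv t] \<open>0 \<le> h\<close> by simp
    moreover have "(1 - t) *\<^sub>R a + t *\<^sub>R (a + h) = a + h / j * real k"
      by (simp add: t_def algebra_simps add_divide_distrib)
    moreover have "(1 - t) * g a + t * g (a + h) = g a + c * real k"
      using \<open>0 < j\<close> by (simp add: t_def c_def field_simps)
    ultimately show ?thesis by simp
  qed
  have "(\<Sum>k<j. h / j / 2 * (g (a + h / j * real (Suc k)) + g (a + h / j * real k)))
      \<le> (\<Sum>k<j. h / j / 2 * ((g a + c * real (Suc k)) + (g a + c * real k)))"
    using chord[of "Suc _"] chord \<open>0 \<le> h\<close> by (intro sum_mono mult_left_mono add_mono) auto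
  also have "\<dots> = h / j / 2 * (real j * (2 * g a + c * real j))"
    by (simp only: sum_distrib_left[symmetric] trapezoid_sum_affine)
  also have "\<dots> = h / 2 * (g a + g (a + h))"
    using \<open>0 < j\<close> by (simp add: c_def field_simps)
  finally show ?thesis .
qed

lemma sigma_l_refine:
  assumes dec: "antimono_on {y0..} p" and "0 < h" "0 < j"
  shows "sigma_l p y0 h N \<le> sigma_l p y0 (h / j) (N * j)"
proof -
  have block: "h * p (y0 + h * real (Suc m))
      \<le> (\<Sum>k<j. h / j * p (y0 + h / j * real (Suc (m * j + k))))" for m
  proof -
    have "antimono_on {y0 + h * m..y0 + h * m + h} p"
      using \<open>0 < h\<close> by (intro monotone_on_subset[OF dec]) auto
    from antimono_on_right_riemann_sum_refine[OF this _ \<open>0 < j\<close>] \<open>0 < h\<close>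
    have "h * p (y0 + h * m + h) \<le> (\<Sum>k<j. h / j * p (y0 + h * m + h / j * real (Suc k)))"
      by simp
    moreover have "y0 + h * m + h / j * real (Suc k) = y0 + h / j * real (Suc (m * j + k))" for k
      using \<open>0 < j\<close> by (simp add: field_simps)
    ultimately show ?thesis by (simp add: algebra_simps)
  qed
  show ?thesis
    unfolding sigma_l_lessThan sum_lessThan_mult_group by (intro sum_mono block)
qed

lemma sigma_t_refine:
  assumes conv: "convex_on {y0..} p" and "0 < h" "0 < j"
  shows "sigma_t p y0 (h / j) (N * j) \<le> sigma_t p y0 h N"
proof -
  have block: "(\<Sum>k<j. h / j / 2 *
        (p (y0 + h / j * real (Suc (m * j + k))) + p (y0 + h / j * real (m * j + k))))
      \<le> h / 2 * (p (y0 + h * real (Suc m)) + p (y0 + h * real m))" for m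
  proof -
    have "convex_on {y0 + h * m..y0 + h * m + h} p"
      using \<open>0 < h\<close> by (intro convex_on_subset[OF conv]) auto
    from convex_on_trapezoid_sum_refine[OF this _ \<open>0 < j\<close>] \<open>0 < h\<close>
    have "(\<Sum>k<j. h / j / 2 *
          (p (y0 + h * m + h / j * real (Suc k)) + p (y0 + h * m + h / j * real k)))
        \<le> h / 2 * (p (y0 + h * m) + p (y0 + h * m + h))"
      by simp
    moreover have "y0 + h * m + h / j * real i = y0 + h / j * real (m * j + i)" for i
      using \<open>0 < j\<close> by (simp add: field_simps)
    moreover have "y0 + h * m + h = y0 + h * real (Suc m)"
      by (simp add: algebra_simps)
    ultimately show ?thesis by (simp only: add_Suc_right add.commute[of "p (y0 + h * real m)"])
  qed
  show ?thesis
    unfolding sigma_t_lessThan sum_lessThan_mult_group by (intro sum_mono block)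
qed

context
  fixes p :: "real \<Rightarrow> real" and y0 :: real
  assumes p_pos: "\<And>y. y0 \<le> y \<Longrightarrow> 0 < p y"
    and p_dec: "strict_antimono_on {y0..} p"
begin

lemma sigma_l_less_sigma_t:
  assumes "0 < h" "0 < N"
  shows "sigma_l p y0 h N < sigma_t p y0 h N"
proof -
  have "sigma_t p y0 h N - sigma_l p y0 h N
      = (\<Sum>i<N. h / 2 * (p (y0 + h * real i) - p (y0 + h * real (Suc i))))"
    unfolding sigma_t_lessThan sigma_l_lessThan sum_subtractf[symmetric]
    by (intro sum.cong) (auto simp: algebra_simps)
  also have "\<dots> > 0"
  proof (intro sum_pos)
    fix i
    have "p (y0 + h * real (Suc i)) < p (y0 + h * real i)"
      using \<open>0 < h\<close> by (intro monotone_onD[OF p_dec]) auto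
    then show "0 < h / 2 * (p (y0 + h * real i) - p (y0 + h * real (Suc i)))"
      using \<open>0 < h\<close> by simp
  qed (use \<open>0 < N\<close> in auto)
  finally show ?thesis by simp
qed

lemma strict_mono_sigma_t:
  assumes "0 < h"
  shows "strict_mono (sigma_t p y0 h)"
  unfolding strict_mono_Suc_iff
proof
  fix n
  have "0 < p (y0 + h * real (Suc n))" "0 < p (y0 + h * real n)"
    using \<open>0 < h\<close> by (auto intro!: p_pos)
  then show "sigma_t p y0 h n < sigma_t p y0 h (Suc n)"
    unfolding sigma_t_lessThan using \<open>0 < h\<close> by simp
qed

lemma less_n2_if_sigma_t_le:
  assumes "0 < h" and n2_exists: "\<exists>N. 0 < N \<and> b \<le> sigma_l p y0 h N"
    and "sigma_t p y0 h N \<le> b"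
  shows "N < n2 p y0 b h"
proof (rule ccontr)
  let ?m = "n2 p y0 b h"
  have "0 < ?m \<and> b \<le> sigma_l p y0 h ?m"
    unfolding n2_def using n2_exists by (rule LeastI_ex)
  then have "b < sigma_t p y0 h ?m"
    using sigma_l_less_sigma_t[OF \<open>0 < h\<close>, of ?m] by linarith
  moreover assume "\<not> N < ?m"
  then have "sigma_t p y0 h ?m \<le> sigma_t p y0 h N"
    using strict_mono_sigma_t[OF \<open>0 < h\<close>] by (simp add: strict_mono_less_eq)
  ultimately show False using \<open>sigma_t p y0 h N \<le> b\<close> by simp
qed

lemma
  assumes "0 < h" and "0 \<le> b" and "\<exists>N. 0 < N \<and> b \<le> sigma_l p y0 h N"
  shows sigma_t_n3_le: "sigma_t p y0 h (n3 p y0 b h) \<le> b"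
    and le_n3_if_sigma_t_le: "sigma_t p y0 h N \<le> b \<Longrightarrow> N \<le> n3 p y0 b h"
proof -
  have bounded: "N \<le> n2 p y0 b h" if "sigma_t p y0 h N \<le> b" for N
    using less_n2_if_sigma_t_le[OF assms(1,3) that] by simp
  show "sigma_t p y0 h (n3 p y0 b h) \<le> b"
    unfolding n3_def
  proof (rule GreatestI_nat[where k = 0])
    show "sigma_t p y0 h 0 \<le> b" using \<open>0 \<le> b\<close> by (simp add: sigma_t_def)
  qed (rule bounded)
  show "N \<le> n3 p y0 b h" if "sigma_t p y0 h N \<le> b"
    unfolding n3_def using that bounded by (rule Greatest_le_nat)
qed

lemma n3_less_n2_and_n3_refine:
  fixes j :: nat
  assumes conv: "convex_on {y0..} p" and "0 < \<epsilon>" "0 < j" "0 \<le> b"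
    and n2_exists: "\<exists>N. 0 < N \<and> b \<le> sigma_l p y0 \<epsilon> N"
  shows "n3 p y0 b (\<epsilon> / j) < n2 p y0 b (\<epsilon> / j)
    \<and> \<epsilon> * n3 p y0 b \<epsilon> \<le> \<epsilon> / j * n3 p y0 b (\<epsilon> / j)"
proof
  let ?h = "\<epsilon> / j"
  have "0 < ?h" using assms by simp
  have p_antimono: "antimono_on {y0..} p"
    using p_dec by (auto simp: monotone_on_def le_less)
  obtain N where "0 < N" "b \<le> sigma_l p y0 \<epsilon> N" using n2_exists by blast
  moreover have "sigma_l p y0 \<epsilon> N \<le> sigma_l p y0 ?h (N * j)"
    using p_antimono \<open>0 < \<epsilon>\<close> \<open>0 < j\<close> by (intro sigma_l_refine) auto
  ultimately have n2_exists_h: "\<exists>N. 0 < N \<and> b \<le> sigma_l p y0 ?h N"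
    using \<open>0 < j\<close> by (intro exI[of _ "N * j"]) auto
  show "n3 p y0 b ?h < n2 p y0 b ?h"
    using sigma_t_n3_le[OF \<open>0 < ?h\<close> \<open>0 \<le> b\<close> n2_exists_h]
    by (rule less_n2_if_sigma_t_le[OF \<open>0 < ?h\<close> n2_exists_h])
  have "sigma_t p y0 ?h (n3 p y0 b \<epsilon> * j) \<le> sigma_t p y0 \<epsilon> (n3 p y0 b \<epsilon>)"
    by (rule sigma_t_refine[OF conv \<open>0 < \<epsilon>\<close> \<open>0 < j\<close>])
  also have "\<dots> \<le> b" by (rule sigma_t_n3_le[OF \<open>0 < \<epsilon>\<close> \<open>0 \<le> b\<close> n2_exists])
  finally have "n3 p y0 b \<epsilon> * j \<le> n3 p y0 b ?h"
    by (rule le_n3_if_sigma_t_le[OF \<open>0 < ?h\<close> \<open>0 \<le> b\<close> n2_exists_h])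
  then have "?h * real (n3 p y0 b \<epsilon> * j) \<le> ?h * n3 p y0 b ?h"
    using \<open>0 < ?h\<close> by (intro mult_left_mono of_nat_mono) auto
  moreover have "?h * real (n3 p y0 b \<epsilon> * j) = \<epsilon> * n3 p y0 b \<epsilon>"
    using \<open>0 < j\<close> by simp
  ultimately show "\<epsilon> * n3 p y0 b \<epsilon> \<le> ?h * n3 p y0 b ?h"
    by simp
qed

end

theorem lemma2:
  fixes f f' p p' p'' :: "real \<Rightarrow> real" and y0 b \<epsilon> :: real
  assumes b_pos: "b > 0" and eps_pos: "\<epsilon> > 0"
    and p_def: "\<And>y. y \<ge> y0 \<Longrightarrow> f y \<noteq> 0 \<and> p y = 1 / f y"
    and f_deriv: "\<And>y. y \<ge> y0 \<Longrightarrow> (f has_real_derivative f' y) (at y within {y0..})"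
    and p_deriv: "\<And>y. y \<ge> y0 \<Longrightarrow> (p has_real_derivative p' y) (at y within {y0..})"
    and p'_deriv: "\<And>y. y \<ge> y0 \<Longrightarrow> (p' has_real_derivative p'' y) (at y within {y0..})"
    and f_y0: "f y0 > 0"
    and f'_pos: "\<And>y. y \<ge> y0 \<Longrightarrow> f' y > 0"
    and p''_pos: "\<And>y. y \<ge> y0 \<Longrightarrow> p'' y > 0"
    and b_lt_int: "ennreal b < (\<integral>\<^sup>+ y. ennreal (p y) * indicator {y0..} y \<partial>lborel)"
    and n2_1_exists: "\<exists>N::nat. 0 < N \<and> b \<le> sigma_l p y0 \<epsilon> N"
  shows "\<forall>j::nat. 0 < j \<longrightarrow>
           n2 p y0 b (\<epsilon> / real j) > n3 p y0 b (\<epsilon> / real j) \<and>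
           (\<epsilon> / real j) * real (n3 p y0 b (\<epsilon> / real j)) \<ge> (\<epsilon> / 1) * real (n3 p y0 b (\<epsilon> / 1))"
proof -
  have f_mono: "strict_mono_on {y0..} f"
    by (rule strict_mono_on_atLeast_if_deriv_pos[OF f_deriv f'_pos])
  have "strict_mono_on {y0..} p'"
    by (rule strict_mono_on_atLeast_if_deriv_pos[OF p'_deriv p''_pos])
  then have p_convex: "convex_on {y0..} p"
    by (intro convex_on_atLeast_if_deriv_mono[OF p_deriv] strict_mono_on_imp_mono_on)
  have f_pos: "0 < f y" if "y0 \<le> y" for y
    using f_y0 monotone_onD[OF f_mono, of y0 y] that by (cases "y = y0") auto
  have p_pos: "0 < p y" if "y0 \<le> y" for y
    using p_def[OF that] f_pos[OF that] by simp
  have p_dec: "strict_antimono_on {y0..} p"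
  proof (rule monotone_onI)
    fix x y assume "x \<in> {y0..}" "y \<in> {y0..}" "x < y"
    then show "p y < p x"
      using f_pos monotone_onD[OF f_mono] p_def by (simp add: frac_less2)
  qed
  show ?thesis
    using n3_less_n2_and_n3_refine[OF p_pos p_dec p_convex eps_pos _ _ n2_1_exists] b_pos by simp
qed

end
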